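(* Let $\epsilon$ be a primitive cube root of unity and, for $\mathbf{a}=(\alpha,\beta,\gamma)\in\mathbb{C}^3$, let $\mathcal{U}_{\mathbf{a}}\subset\mathbb{C}^4$ be the hypersurface $X^2-U^2=(Y-V+\alpha)(Y-\epsilon V+\beta)(Y-\epsilon^2V+\gamma)$. Then: (1) if $\alpha+\epsilon\beta+\epsilon^2\gamma=0$, $\mathcal{U}_{\mathbf{a}}$ has a unique singular point, which is analytically a cusp of the same type as $\mathcal{U}_0=\{X^2-U^2-Y^3+V^3=0\}$; (2) if $\alpha+\epsilon\beta+\epsilon^2\gamma\neq0$, $\mathcal{U}_{\mathbf{a}}$ has exactly three distinct singular points, all ordinary double points; (3) the family $\{\mathcal{U}_{\mathbf{a}}\}$ is the pull-back of the miniversal deformation $\{\mathcal{X}_\Lambda\}_{\Lambda\in T^1}$ of the cusp along a holomorphic map germ $g:(\mathbb{C}^3,0)\to(T^1,0)$ whose image is the curve $C=\{\sigma^3-27\lambda=\mu=\nu=0\}$; explicitly, up to a nonzero constant $k$, $g(\mathbf{a})=(-k^3s^3,0,0,-3ks)$ with $s=\alpha+\epsilon\beta+\epsilon^2\gamma$, in coordinates $(\lambda,\mu,\nu,\sigma)$.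
   Context: The miniversal deformation of the cusp $x^2-y^3=z^2-w^3$ is $\mathcal{X}_\Lambda=\{x^2-y^3-z^2+w^3+\lambda+\mu y-\nu w+\sigma yw=0\}$, $\Lambda=(\lambda,\mu,\nu,\sigma)\in T^1\cong\mathbb{C}^4$. The cusp equation factors as $(X-U)(X+U)=(Y-V)(Y-\epsilon V)(Y-\epsilon^2V)$. *)

theory Defs
  imports "HOL-Analysis.Analysis"
begin

text \<open>The scalar multiplication of the domain is
passed explicitly (componentwise scaling for complex vectors, and for pairs of them).\<close>

definition holo_gen :: "(complex \<Rightarrow> 'a \<Rightarrow> 'a) \<Rightarrow> ('a::real_normed_vector \<Rightarrow> complex) \<Rightarrow> 'a set \<Rightarrow> bool" where
  "holo_gen sc f S \<longleftrightarrow> open S \<and>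
     (\<forall>x\<in>S. \<exists>L. (f has_derivative L) (at x) \<and> (\<forall>c v. L (sc c v) = c * L v))"

definition holo_fun_on :: "(complex^'n \<Rightarrow> complex) \<Rightarrow> (complex^'n) set \<Rightarrow> bool" where
  "holo_fun_on f S \<longleftrightarrow> holo_gen (\<lambda>c v. c *s v) f S"

definition holo_map_on :: "(complex^'n \<Rightarrow> complex^'m) \<Rightarrow> (complex^'n) set \<Rightarrow> bool" where
  "holo_map_on f S \<longleftrightarrow> (\<forall>i. holo_fun_on (\<lambda>x. f x $ i) S)"

definition holo2_fun_on :: "((complex^'n) \<times> (complex^'m) \<Rightarrow> complex) \<Rightarrow> ((complex^'n) \<times> (complex^'m)) set \<Rightarrow> bool" where
  "holo2_fun_on f S \<longleftrightarrow> holo_gen (\<lambda>c (a, p). (c *s a, c *s p)) f S"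

definition holo2_map_on :: "((complex^'n) \<times> (complex^'m) \<Rightarrow> complex^'k) \<Rightarrow> ((complex^'n) \<times> (complex^'m)) set \<Rightarrow> bool" where
  "holo2_map_on f S \<longleftrightarrow> (\<forall>i. holo2_fun_on (\<lambda>x. f x $ i) S)"

definition local_biholo :: "(complex^'n \<Rightarrow> complex^'n) \<Rightarrow> complex^'n \<Rightarrow> bool" where
  "local_biholo \<phi> p \<longleftrightarrow> (\<exists>V W \<psi>. open V \<and> open W \<and> p \<in> V \<and>
       holo_map_on \<phi> V \<and> holo_map_on \<psi> W \<and> \<phi> ` V = W \<and> (\<forall>x\<in>V. \<psi> (\<phi> x) = x))"

definition germ_iso :: "(complex^'n \<Rightarrow> complex) \<Rightarrow> complex^'n \<Rightarrow> (complex^'n \<Rightarrow> complex) \<Rightarrow> complex^'n \<Rightarrow> bool" where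
  "germ_iso F p G q \<longleftrightarrow> (\<exists>V W \<phi> \<psi>. open V \<and> open W \<and> p \<in> V \<and>
       holo_map_on \<phi> V \<and> holo_map_on \<psi> W \<and> \<phi> ` V = W \<and> (\<forall>x\<in>V. \<psi> (\<phi> x) = x) \<and>
       \<phi> p = q \<and> (\<forall>x\<in>V. F x = 0 \<longleftrightarrow> G (\<phi> x) = 0))"

definition pd :: "(complex^'n \<Rightarrow> complex) \<Rightarrow> 'n \<Rightarrow> complex^'n \<Rightarrow> complex" where
  "pd F i p = deriv (\<lambda>t. F (p + t *s axis i 1)) 0"

definition sing_points :: "(complex^'n \<Rightarrow> complex) \<Rightarrow> (complex^'n) set" where
  "sing_points F = {p. F p = 0 \<and> (\<forall>i. pd F i p = 0)}"

definition hessian :: "(complex^'n \<Rightarrow> complex) \<Rightarrow> complex^'n \<Rightarrow> complex^'n^'n" where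
  "hessian F p = (\<chi> i j. pd (pd F j) i p)"

definition ordinary_double_point :: "(complex^'n \<Rightarrow> complex) \<Rightarrow> complex^'n \<Rightarrow> bool" where
  "ordinary_double_point F p \<longleftrightarrow> p \<in> sing_points F \<and> det (hessian F p) \<noteq> 0"

text \<open>U_a, coordinates x = (X, Y, U, V) = (x$1, x$2, x$3, x$4); a = (alpha, beta, gamma).\<close>
definition Ufam :: "complex \<Rightarrow> complex^3 \<Rightarrow> complex^4 \<Rightarrow> complex" where
  "Ufam eps a x = (x$1)^2 - (x$3)^2
      - (x$2 - x$4 + a$1) * (x$2 - eps * x$4 + a$2) * (x$2 - eps^2 * x$4 + a$3)"

text \<open>Miniversal deformation X_Lambda, coordinates (x,y,z,w), Lambda = (lambda, mu, nu, sigma).\<close>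
definition Xfam :: "complex^4 \<Rightarrow> complex^4 \<Rightarrow> complex" where
  "Xfam L x = (x$1)^2 - (x$2)^3 - (x$3)^2 + (x$4)^3 + L$1 + L$2 * x$2 - L$3 * x$4 + L$4 * x$2 * x$4"

definition curveC :: "(complex^4) set" where
  "curveC = {L. (L$4)^3 - 27 * L$1 = 0 \<and> L$2 = 0 \<and> L$3 = 0}"

end

theory Submission imports Defs begin

(*
  Write the right-hand side of U_a as the product of the three linear forms
  L1 = Y - V + alpha, L2 = Y - eps V + beta, L3 = Y - eps^2 V + gamma. Everything
  follows from two elementary observations about these forms:
   (i)  L1 + eps L2 + eps^2 L3 = s := alpha + eps beta + eps^2 gamma, independently of
        the point, so either all three lines {Li = 0} (in the (Y,V)-plane) meet in one
        point (s = 0), or any two of them meet in a point off the third (s <> 0);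
   (ii) the identity x^3 + y^3 + z^3 - 3xyz = (x+y+z)(x+eps y+eps^2 z)(x+eps^2 y+eps z)
        turns L1 L2 L3 into y^3 - w^3 + c^3 + 3cyw after a translation (y,w) of (Y,V),
        with c = s/3; this is the miniversal family at Lambda = (-c^3, 0, 0, -3c).
*)

definition holo_at :: "(complex \<Rightarrow> 'a \<Rightarrow> 'a) \<Rightarrow> ('a::real_normed_vector \<Rightarrow> complex) \<Rightarrow> 'a \<Rightarrow> bool" where
  "holo_at sc f x \<longleftrightarrow> (\<exists>L. (f has_derivative L) (at x) \<and> (\<forall>c v. L (sc c v) = c * L v))"

lemma holo_genI: "open S \<Longrightarrow> (\<And>x. x \<in> S \<Longrightarrow> holo_at sc f x) \<Longrightarrow> holo_gen sc f S"
  unfolding holo_gen_def holo_at_def by blast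

lemma holo_at_const [intro!]: "holo_at sc (\<lambda>x. k) x"
  unfolding holo_at_def by (intro exI[of _ "\<lambda>_. 0"]) (auto intro: derivative_eq_intros)

lemma holo_at_add [intro!]: "holo_at sc f x \<Longrightarrow> holo_at sc g x \<Longrightarrow> holo_at sc (\<lambda>x. f x + g x) x"
  unfolding holo_at_def
  by (elim exE conjE, rename_tac L M, rule_tac x = "\<lambda>h. L h + M h" in exI)
     (auto intro: derivative_eq_intros simp: algebra_simps)

lemma holo_at_minus [intro!]: "holo_at sc f x \<Longrightarrow> holo_at sc (\<lambda>x. - f x) x"
  unfolding holo_at_def
  by (elim exE conjE, rename_tac L, rule_tac x = "\<lambda>h. - L h" in exI)
     (auto intro: derivative_eq_intros)

lemma holo_at_diff [intro!]: "holo_at sc f x \<Longrightarrow> holo_at sc g x \<Longrightarrow> holo_at sc (\<lambda>x. f x - g x) x"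
  using holo_at_add[of sc f x "\<lambda>x. - g x"] holo_at_minus[of sc g x] by simp

lemma holo_at_mult [intro!]: "holo_at sc f x \<Longrightarrow> holo_at sc g x \<Longrightarrow> holo_at sc (\<lambda>x. f x * g x) x"
  unfolding holo_at_def
  by (elim exE conjE, rename_tac L M, rule_tac x = "\<lambda>h. f x * M h + L h * g x" in exI)
     (auto intro: derivative_eq_intros simp: algebra_simps)

lemma holo_at_power [intro!]: "holo_at sc f x \<Longrightarrow> holo_at sc (\<lambda>x. f x ^ n) x"
  by (induction n) (auto simp del: power_Suc simp: power_Suc)

lemma holo_at_divide_const [intro!]: "holo_at sc f x \<Longrightarrow> holo_at sc (\<lambda>x. f x / k) x"
proof -
  assume "holo_at sc f x"
  then have "holo_at sc (\<lambda>x. f x * (1 / k)) x" by (rule holo_at_mult[OF _ holo_at_const])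
  then show ?thesis by simp
qed

lemma holo_at_coordinate [intro!]: "holo_at (\<lambda>c v. c *s v) (\<lambda>x. x $ j) x"
  unfolding holo_at_def
  by (intro exI[of _ "\<lambda>h. h $ j"])
     (auto intro: bounded_linear.has_derivative[OF bounded_linear_vec_nth] has_derivative_ident)

lemma holo_at_fst_coordinate [intro!]: "holo_at (\<lambda>c (a, p). (c *s a, c *s p)) (\<lambda>x. fst x $ j) x"
  unfolding holo_at_def
  by (intro exI[of _ "\<lambda>h. fst h $ j"])
     (auto intro!: derivative_eq_intros bounded_linear.has_derivative[OF bounded_linear_vec_nth])

lemma holo_at_snd_coordinate [intro!]: "holo_at (\<lambda>c (a, p). (c *s a, c *s p)) (\<lambda>x. snd x $ j) x"
  unfolding holo_at_def
  by (intro exI[of _ "\<lambda>h. snd h $ j"])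
     (auto intro!: derivative_eq_intros bounded_linear.has_derivative[OF bounded_linear_vec_nth])

lemma holo_map_on_translation: "holo_map_on (\<lambda>x::complex^'n. x + q) UNIV"
  unfolding holo_map_on_def holo_fun_on_def by (intro allI holo_genI) auto

lemma pd_eqI:
  assumes "((\<lambda>t. F (p + t *s axis i 1)) has_field_derivative D) (at 0)"
  shows "pd F i p = D"
  unfolding pd_def using assms by (rule DERIV_imp_deriv)

lemma axis_one_nth: "(axis (i::'n::finite) (1::complex)) $ j = (if j = i then 1 else 0)"
  by (simp add: axis_def)

lemma primitive_cube_root:
  fixes eps :: complex
  assumes "eps ^ 3 = 1" and "eps \<noteq> 1"
  shows "1 + eps + eps^2 = 0" and "eps \<noteq> 0" and "1 \<noteq> eps^2" and "eps \<noteq> eps^2"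
proof -
  have "(eps - 1) * (1 + eps + eps^2) = eps^3 - 1"
    by (simp add: algebra_simps power2_eq_square power3_eq_cube)
  then show sum0: "1 + eps + eps^2 = 0" using assms by simp
  show "eps \<noteq> 0" using assms(1) by auto
  then show "eps \<noteq> eps^2" using assms(2) by (simp add: power2_eq_square)
  show "1 \<noteq> eps^2"
  proof
    assume "1 = eps^2"
    then have "eps^3 = eps" by (simp add: power3_eq_cube power2_eq_square)
    then show False using assms by simp
  qed
qed

lemma sum_of_cubes_factorisation:
  fixes eps x y z :: "'a::idom"
  assumes "1 + eps + eps^2 = 0"
  shows "(x + y + z) * (x + eps * y + eps^2 * z) * (x + eps^2 * y + eps * z)
           = x^3 + y^3 + z^3 - 3 * x * y * z"
proof -
  have e3: "eps^3 = 1"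
  proof -
    have "eps^3 - 1 = (eps - 1) * (1 + eps + eps^2)"
      by (simp add: algebra_simps power2_eq_square power3_eq_cube)
    then show ?thesis using assms by simp
  qed
  show ?thesis using assms e3 by algebra
qed

definition lin :: "complex \<Rightarrow> complex \<Rightarrow> complex^4 \<Rightarrow> complex" where
  "lin c b p = p$2 - c * p$4 + b"

abbreviation L1 :: "complex \<Rightarrow> complex^3 \<Rightarrow> complex^4 \<Rightarrow> complex" where
  "L1 eps a \<equiv> lin 1 (a$1)"
abbreviation L2 :: "complex \<Rightarrow> complex^3 \<Rightarrow> complex^4 \<Rightarrow> complex" where
  "L2 eps a \<equiv> lin eps (a$2)"
abbreviation L3 :: "complex \<Rightarrow> complex^3 \<Rightarrow> complex^4 \<Rightarrow> complex" where
  "L3 eps a \<equiv> lin (eps^2) (a$3)"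

lemma Ufam_lin: "Ufam eps a p = (p$1)^2 - (p$3)^2 - L1 eps a p * L2 eps a p * L3 eps a p"
  by (simp add: Ufam_def lin_def)

lemma lin_weighted_sum:
  fixes a :: "complex^3"
  assumes "eps ^ 3 = 1" and "eps \<noteq> 1"
  shows "L1 eps a p + eps * L2 eps a p + eps^2 * L3 eps a p = a$1 + eps * a$2 + eps^2 * a$3"
proof -
  have "L1 eps a p + eps * L2 eps a p + eps^2 * L3 eps a p - (a$1 + eps * a$2 + eps^2 * a$3)
     = p$2 * (1 + eps + eps^2) - p$4 * (1 + eps^2 + eps^3 * eps)"
    by (simp add: lin_def algebra_simps power2_eq_square power3_eq_cube)
  also have "\<dots> = 0"
    using primitive_cube_root(1)[OF assms] assms(1) by (simp add: power2_eq_square algebra_simps)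
  finally show ?thesis by simp
qed

lemma pd_Ufam:
  "pd (Ufam eps a) 1 = (\<lambda>p. 2 * p$1)"
  "pd (Ufam eps a) 3 = (\<lambda>p. - 2 * p$3)"
  "pd (Ufam eps a) 2 = (\<lambda>p. - (L2 eps a p * L3 eps a p + L1 eps a p * L3 eps a p + L1 eps a p * L2 eps a p))"
  "pd (Ufam eps a) 4 = (\<lambda>p. L2 eps a p * L3 eps a p + eps * L1 eps a p * L3 eps a p + eps^2 * L1 eps a p * L2 eps a p)"
  by (rule ext, rule pd_eqI, simp add: Ufam_def axis_one_nth lin_def,
      (rule derivative_eq_intros refl)+, simp add: algebra_simps)+

lemma hessian_Ufam: "hessian (Ufam eps a) p $ i $ j =
  (if i = 1 \<and> j = 1 then 2 else if i = 3 \<and> j = 3 then -2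
   else if i = 2 \<and> j = 2 then -2 * (L1 eps a p + L2 eps a p + L3 eps a p)
   else if (i = 2 \<and> j = 4) \<or> (i = 4 \<and> j = 2)
     then (eps + eps^2) * L1 eps a p + (1 + eps^2) * L2 eps a p + (1 + eps) * L3 eps a p
   else if i = 4 \<and> j = 4 then -2 * (eps^3 * L1 eps a p + eps^2 * L2 eps a p + eps * L3 eps a p)
   else 0)"
  unfolding hessian_def
  using exhaust_4[of i] exhaust_4[of j]
  apply (elim disjE; simp add: pd_Ufam)
  apply (rule pd_eqI; (simp add: axis_one_nth lin_def)?; ((rule derivative_eq_intros refl)+)?;
      (simp add: algebra_simps power2_eq_square power3_eq_cube)?)+
  done

text \<open>If a product of three numbers and its derivative-like symmetric sum both vanish,
  two of the factors vanish: this is why singular points lie on two of the planes.\<close>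
lemma two_of_three_zero:
  fixes x y z :: complex
  assumes "x * y * z = 0" and "y * z + x * z + x * y = 0"
  shows "(x = 0 \<and> y = 0) \<or> (x = 0 \<and> z = 0) \<or> (y = 0 \<and> z = 0)"
  using assms by auto

lemma sing_points_Ufam_iff:
  "p \<in> sing_points (Ufam eps a) \<longleftrightarrow> p$1 = 0 \<and> p$3 = 0 \<and>
     ((L1 eps a p = 0 \<and> L2 eps a p = 0) \<or> (L1 eps a p = 0 \<and> L3 eps a p = 0) \<or>
      (L2 eps a p = 0 \<and> L3 eps a p = 0))"
proof
  assume "p \<in> sing_points (Ufam eps a)"
  then have U0: "Ufam eps a p = 0" and grad0: "\<And>i. pd (Ufam eps a) i p = 0"
    by (simp_all add: sing_points_def)
  have XU: "p$1 = 0" "p$3 = 0" using grad0[of 1] grad0[of 3] by (simp_all add: pd_Ufam)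
  have "L1 eps a p * L2 eps a p * L3 eps a p = 0" using U0 XU by (simp add: Ufam_lin)
  moreover have "L2 eps a p * L3 eps a p + L1 eps a p * L3 eps a p + L1 eps a p * L2 eps a p = 0"
    using grad0[of 2] unfolding pd_Ufam by (metis neg_equal_0_iff_equal)
  ultimately show "p$1 = 0 \<and> p$3 = 0 \<and> ((L1 eps a p = 0 \<and> L2 eps a p = 0) \<or>
      (L1 eps a p = 0 \<and> L3 eps a p = 0) \<or> (L2 eps a p = 0 \<and> L3 eps a p = 0))"
    using XU two_of_three_zero by blast
qed (auto simp: sing_points_def forall_4 pd_Ufam Ufam_lin)

text \<open>The unique point with X = U = 0 on the two planes Y - cV + b = 0 and Y - dV + e = 0
  (which are transversal when c <> d).\<close>
definition meet :: "complex \<Rightarrow> complex \<Rightarrow> complex \<Rightarrow> complex \<Rightarrow> complex^4" where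
  "meet c b d e = (\<chi> i. if i = 2 then c * ((b - e) / (c - d)) - b
                       else if i = 4 then (b - e) / (c - d) else 0)"

lemma meet_on:
  assumes "c \<noteq> d"
  shows "lin c b (meet c b d e) = 0" "lin d e (meet c b d e) = 0"
    "meet c b d e $ 1 = 0" "meet c b d e $ 3 = 0"
proof -
  define V where "V = (b - e) / (c - d)"
  have "lin d e (meet c b d e) = (c - d) * V - b + e"
    unfolding meet_def lin_def V_def[symmetric] by (simp add: algebra_simps)
  also have "\<dots> = 0" using assms unfolding V_def by simp
  finally show "lin d e (meet c b d e) = 0" .
qed (simp_all add: meet_def lin_def)

lemma meet_unique:
  assumes "c \<noteq> d" "p$1 = 0" "p$3 = 0" "lin c b p = 0" "lin d e p = 0"
  shows "p = meet c b d e"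
proof -
  have "(c - d) * p$4 = b - e" using assms(4,5) unfolding lin_def by algebra
  then have "p$4 = (b - e) / (c - d)" using assms(1) by (simp add: field_simps)
  moreover have "p$2 = c * p$4 - b" using assms(4) by (simp add: lin_def algebra_simps)
  ultimately show ?thesis using assms by (simp add: meet_def vec_eq_iff forall_4)
qed

lemma det_block_nonzero:
  fixes M :: "complex^4^4"
  assumes M: "\<And>i j. M$i$j = (if i = 1 \<and> j = 1 then 2 else if i = 3 \<and> j = 3 then -2
     else if i = 2 \<and> j = 2 then b else if (i = 2 \<and> j = 4) \<or> (i = 4 \<and> j = 2) then c
     else if i = 4 \<and> j = 4 then d else 0)"
    and D: "b * d - c * c \<noteq> 0"
  shows "det M \<noteq> 0"
proof -
  have "x = 0" if "M *v x = 0" for x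
  proof -
    from that have "(M *v x)$1 = 0" "(M *v x)$2 = 0" "(M *v x)$3 = 0" "(M *v x)$4 = 0" by simp_all
    then have e: "2 * x$1 = 0" "b * x$2 + c * x$4 = 0" "-2 * x$3 = 0" "c * x$2 + d * x$4 = 0"
      by (simp_all add: matrix_vector_mult_def sum_4 M)
    have "x$2 * (b*d - c*c) = d * (b * x$2 + c * x$4) - c * (c * x$2 + d * x$4)"
      by (simp add: algebra_simps)
    then have "x$2 = 0" using e D by simp
    moreover have "x$4 * (b*d - c*c) = b * (c * x$2 + d * x$4) - c * (b * x$2 + c * x$4)"
      by (simp add: algebra_simps)
    then have "x$4 = 0" using e D by simp
    ultimately show "x = 0" using e by (simp add: vec_eq_iff forall_4)
  qed
  then show ?thesis
    using matrix_left_invertible_ker invertible_left_inverse invertible_det_nz by metis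
qed

text \<open>At a point where exactly two of the forms vanish, the determinant of the (Y, V)-block
  of the Hessian is 3 eps^k times the square of the remaining form.\<close>
lemma hessian_block_det_nonzero:
  fixes eps x y z :: complex
  assumes "eps ^ 3 = 1" and "eps \<noteq> 1"
    and xyz: "(x = 0 \<and> y = 0 \<and> z \<noteq> 0) \<or> (x = 0 \<and> z = 0 \<and> y \<noteq> 0) \<or> (y = 0 \<and> z = 0 \<and> x \<noteq> 0)"
  shows "(-2 * (x + y + z)) * (-2 * (eps^3 * x + eps^2 * y + eps * z))
     - ((eps + eps^2) * x + (1 + eps^2) * y + (1 + eps) * z)
       * ((eps + eps^2) * x + (1 + eps^2) * y + (1 + eps) * z) \<noteq> 0"
    (is "?det \<noteq> 0")
proof -
  note E = primitive_cube_root[OF assms(1,2)]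
  from xyz consider "x = 0" "y = 0" "z \<noteq> 0" | "x = 0" "z = 0" "y \<noteq> 0" | "y = 0" "z = 0" "x \<noteq> 0"
    by blast
  then show ?thesis
  proof cases
    case 1
    then have "?det = 3 * eps * z^2" using E(1) assms(1) by algebra
    then show ?thesis using 1 E(2) by simp
  next
    case 2
    then have "?det = 3 * eps^2 * y^2" using E(1) assms(1) by algebra
    then show ?thesis using 2 E(2) by simp
  next
    case 3
    then have "?det = 3 * x^2" using E(1) assms(1) by algebra
    then show ?thesis using 3 by simp
  qed
qed

section \<open>Part (1): s(a) = 0, a single cusp\<close>

lemma Ufam_translate:
  assumes "L1 eps a q = 0" "L2 eps a q = 0" "L3 eps a q = 0" "q$1 = 0" "q$3 = 0"
  shows "Ufam eps a x = Ufam eps 0 (x - q)"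
proof -
  have a: "a$1 = q$4 - q$2" "a$2 = eps * q$4 - q$2" "a$3 = eps^2 * q$4 - q$2"
    using assms(1-3) by (simp_all add: lin_def algebra_simps)
  show ?thesis by (simp add: Ufam_def a assms(4,5) algebra_simps)
qed

lemma germ_iso_translate:
  assumes "\<And>x. F x = G (x - q)"
  shows "germ_iso F q G 0"
proof -
  have "(\<lambda>x. x - q) ` UNIV = UNIV"
    by (auto simp: image_iff intro!: exI[of _ "_ + q"])
  then show ?thesis
    unfolding germ_iso_def
    using holo_map_on_translation[of "- q"] holo_map_on_translation[of q] assms
    by (intro exI[of _ UNIV] exI[of _ "\<lambda>x. x - q"] exI[of _ "\<lambda>x. x + q"]) auto
qed

lemma cusp_case:
  fixes a :: "complex^3"
  assumes eps: "eps ^ 3 = 1" "eps \<noteq> 1" and s0: "a$1 + eps * a$2 + eps^2 * a$3 = 0"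
  shows "\<exists>p. sing_points (Ufam eps a) = {p} \<and> germ_iso (Ufam eps a) p (Ufam eps 0) 0"
proof -
  have ne: "1 \<noteq> eps" "eps \<noteq> 0" using eps primitive_cube_root(2)[OF eps] by auto
  define q where "q = meet 1 (a$1) eps (a$2)"
  note q = meet_on[OF ne(1), where b = "a$1" and e = "a$2", folded q_def]
  text \<open>By observation (i), two vanishing forms force the third one to vanish.\<close>
  have third: "L1 eps a p + eps * L2 eps a p + eps^2 * L3 eps a p = 0" for p
    using lin_weighted_sum[OF eps, of a p] s0 by simp
  have "L3 eps a q = 0" using third[of q] q ne by simp
  then have U: "Ufam eps a x = Ufam eps 0 (x - q)" for x
    using q by (intro Ufam_translate) auto
  have "sing_points (Ufam eps a) = {q}"
  proof (intro equalityI subsetI)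
    fix p assume p: "p \<in> sing_points (Ufam eps a)"
    then have "L1 eps a p = 0 \<and> L2 eps a p = 0"
      using third[of p] ne unfolding sing_points_Ufam_iff by auto
    then show "p \<in> {q}" using p unfolding q_def sing_points_Ufam_iff
      by (auto intro: meet_unique[OF ne(1)])
  qed (use q in \<open>simp add: sing_points_Ufam_iff\<close>)
  then show ?thesis using germ_iso_translate[of "Ufam eps a" "Ufam eps 0" q] U by blast
qed

section \<open>Part (2): s(a) <> 0, three ordinary double points\<close>

text \<open>If s(a) <> 0, no point lies on all three planes, so the three pairwise meets are the
  three distinct singular points.\<close>
lemma three_singular_points:
  fixes a :: "complex^3"
  assumes eps: "eps ^ 3 = 1" "eps \<noteq> 1" and s: "a$1 + eps * a$2 + eps^2 * a$3 \<noteq> 0"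
  shows "card (sing_points (Ufam eps a)) = 3"
proof -
  have ne: "1 \<noteq> eps" "1 \<noteq> eps^2" "eps \<noteq> eps^2"
    using eps primitive_cube_root(3,4)[OF eps] by auto
  define q12 where "q12 = meet 1 (a$1) eps (a$2)"
  define q13 where "q13 = meet 1 (a$1) (eps^2) (a$3)"
  define q23 where "q23 = meet eps (a$2) (eps^2) (a$3)"
  note o12 = meet_on[OF ne(1), where b = "a$1" and e = "a$2", folded q12_def]
  note o13 = meet_on[OF ne(2), where b = "a$1" and e = "a$3", folded q13_def]
  note o23 = meet_on[OF ne(3), where b = "a$2" and e = "a$3", folded q23_def]
  have nz: "L1 eps a p + eps * L2 eps a p + eps^2 * L3 eps a p \<noteq> 0" for p
    using lin_weighted_sum[OF eps, of a p] s by simp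
  have "sing_points (Ufam eps a) = {q12, q13, q23}"
  proof (intro equalityI subsetI)
    fix p assume p: "p \<in> sing_points (Ufam eps a)"
    then show "p \<in> {q12, q13, q23}"
      unfolding q12_def q13_def q23_def sing_points_Ufam_iff
      using meet_unique[OF ne(1)] meet_unique[OF ne(2)] meet_unique[OF ne(3)] by blast
  qed (use o12 o13 o23 in \<open>auto simp: sing_points_Ufam_iff\<close>)
  moreover have "q12 \<noteq> q13" "q12 \<noteq> q23" "q13 \<noteq> q23"
    using o12 o13 o23 nz[of q12] nz[of q13] by auto
  ultimately show ?thesis by simp
qed

lemma ordinary_double_points:
  fixes a :: "complex^3"
  assumes eps: "eps ^ 3 = 1" "eps \<noteq> 1" and s: "a$1 + eps * a$2 + eps^2 * a$3 \<noteq> 0"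
    and p: "p \<in> sing_points (Ufam eps a)"
  shows "ordinary_double_point (Ufam eps a) p"
proof -
  have "L1 eps a p + eps * L2 eps a p + eps^2 * L3 eps a p \<noteq> 0"
    using lin_weighted_sum[OF eps, of a p] s by simp
  with p have "(L1 eps a p = 0 \<and> L2 eps a p = 0 \<and> L3 eps a p \<noteq> 0) \<or>
      (L1 eps a p = 0 \<and> L3 eps a p = 0 \<and> L2 eps a p \<noteq> 0) \<or>
      (L2 eps a p = 0 \<and> L3 eps a p = 0 \<and> L1 eps a p \<noteq> 0)"
    unfolding sing_points_Ufam_iff by auto
  then have "det (hessian (Ufam eps a) p) \<noteq> 0"
    by (rule det_block_nonzero[OF hessian_Ufam hessian_block_det_nonzero[OF eps]])
  then show ?thesis using p unfolding ordinary_double_point_def by simp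
qed

section \<open>Part (3): U_a as a pull-back of the miniversal deformation\<close>

text \<open>The base map g (with k = 1/3) and the fibrewise coordinate change Phi, which
  translates (Y, V) to the coordinates (y, w) of observation (ii).\<close>
definition base_map :: "complex \<Rightarrow> complex \<Rightarrow> complex^3 \<Rightarrow> complex^4" where
  "base_map eps k a = (\<chi> i. if i = 1 then - (k^3 * (a$1 + eps * a$2 + eps^2 * a$3)^3)
     else if i = 4 then - 3 * k * (a$1 + eps * a$2 + eps^2 * a$3) else 0)"

definition coord_change :: "complex \<Rightarrow> (complex^3) \<times> (complex^4) \<Rightarrow> complex^4" where
  "coord_change eps z = (\<chi> i. if i = 1 then snd z $ 1
     else if i = 2 then snd z $ 2 + (fst z $ 1 + fst z $ 2 + fst z $ 3) / 3
     else if i = 3 then snd z $ 3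
     else snd z $ 4 - (fst z $ 1 + eps^2 * fst z $ 2 + eps * fst z $ 3) / 3)"

lemma base_map_holomorphic: "holo_map_on (base_map eps k) UNIV"
  unfolding holo_map_on_def holo_fun_on_def
proof (intro allI holo_genI)
  fix i :: 4 and x :: "complex^3"
  show "holo_at (\<lambda>c v. c *s v) (\<lambda>x. base_map eps k x $ i) x"
    unfolding base_map_def by (cases "i = 1"; cases "i = 4") auto
qed simp

lemma base_map_image: "base_map eps (1/3) ` UNIV = curveC"
proof (intro equalityI subsetI)
  fix L assume L: "L \<in> curveC"
  define a :: "complex^3" where "a = (\<chi> i. if i = 1 then - L$4 else 0)"
  have "L$1 = (L$4)^3 / 27" using L by (simp add: curveC_def field_simps)
  then have "base_map eps (1/3) a = L"
    using L unfolding vec_eq_iff forall_4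
    by (simp add: base_map_def a_def curveC_def power3_eq_cube)
  then show "L \<in> base_map eps (1/3) ` UNIV" by blast
qed (auto simp: curveC_def base_map_def power3_eq_cube algebra_simps)

lemma coord_change_holomorphic: "holo2_map_on (coord_change eps) UNIV"
  unfolding holo2_map_on_def holo2_fun_on_def
proof (intro allI holo_genI)
  fix i :: 4 and z :: "(complex^3) \<times> (complex^4)"
  show "holo_at (\<lambda>c (a, p). (c *s a, c *s p)) (\<lambda>z. coord_change eps z $ i) z"
    unfolding coord_change_def by (cases "i = 1"; cases "i = 2"; cases "i = 3") auto
qed simp

lemma coord_change_zero: "coord_change eps (0, p) = p"
  unfolding vec_eq_iff forall_4 by (simp add: coord_change_def)

lemma Ufam_pullback:
  assumes eps: "eps ^ 3 = 1" "eps \<noteq> 1"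
  shows "Ufam eps a p = Xfam (base_map eps (1/3) a) (coord_change eps (a, p))"
proof -
  note E = primitive_cube_root(1)[OF eps]
  define y where "y = p$2 + (a$1 + a$2 + a$3) / 3"
  define w where "w = p$4 - (a$1 + eps^2 * a$2 + eps * a$3) / 3"
  define c where "c = (a$1 + eps * a$2 + eps^2 * a$3) / 3"
  have "p$2 - p$4 + a$1 = y + (- w) + c"
    "p$2 - eps * p$4 + a$2 = y + eps * (- w) + eps^2 * c"
    "p$2 - eps^2 * p$4 + a$3 = y + eps^2 * (- w) + eps * c"
    unfolding y_def w_def c_def using E eps(1) by algebra+
  then have "Ufam eps a p = (p$1)^2 - (p$3)^2 - (y^3 + (- w)^3 + c^3 - 3 * y * (- w) * c)"
    unfolding Ufam_def by (simp only: sum_of_cubes_factorisation[OF E])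
  moreover have "base_map eps (1/3) a $ 1 = - (c^3)" "base_map eps (1/3) a $ 2 = 0"
    "base_map eps (1/3) a $ 3 = 0" "base_map eps (1/3) a $ 4 = - 3 * c"
    by (simp_all add: base_map_def c_def power_divide)
  moreover have "coord_change eps (a, p) $ 1 = p$1" "coord_change eps (a, p) $ 2 = y"
    "coord_change eps (a, p) $ 3 = p$3" "coord_change eps (a, p) $ 4 = w"
    by (simp_all add: coord_change_def y_def w_def)
  ultimately show ?thesis by (simp add: Xfam_def algebra_simps)
qed

lemma miniversal_pullback:
  assumes eps: "eps ^ 3 = 1" "eps \<noteq> 1"
  shows "\<exists>N \<Phi> u. open N \<and> (0, 0) \<in> N \<and>
     holo2_map_on \<Phi> N \<and> holo2_fun_on u N \<and> (\<forall>z\<in>N. u z \<noteq> 0) \<and>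
     \<Phi> (0, 0) = 0 \<and> local_biholo (\<lambda>p. \<Phi> (0, p)) 0 \<and>
     (\<forall>(a, p) \<in> N. Ufam eps a p = u (a, p) * Xfam (base_map eps (1/3) a) (\<Phi> (a, p)))"
proof -
  have "holo2_fun_on (\<lambda>z. 1) UNIV"
    unfolding holo2_fun_on_def by (intro holo_genI) auto
  moreover have "local_biholo (\<lambda>p. coord_change eps (0, p)) 0"
    unfolding coord_change_zero local_biholo_def
    using holo_map_on_translation[of 0] by (intro exI[of _ UNIV] exI[of _ "\<lambda>p. p"]) auto
  ultimately show ?thesis
    using coord_change_holomorphic Ufam_pullback[OF eps] coord_change_zero[of eps 0]
    by (intro exI[of _ UNIV] exI[of _ "coord_change eps"] exI[of _ "\<lambda>z. 1"]) auto
qed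

theorem mainTheorem7:
  fixes eps :: complex
  assumes "eps ^ 3 = 1" and "eps \<noteq> 1"
  shows
    "(\<forall>a :: complex^3. a$1 + eps * a$2 + eps^2 * a$3 = 0 \<longrightarrow>
        (\<exists>p. sing_points (Ufam eps a) = {p} \<and> germ_iso (Ufam eps a) p (Ufam eps 0) 0))
   \<and> (\<forall>a :: complex^3. a$1 + eps * a$2 + eps^2 * a$3 \<noteq> 0 \<longrightarrow>
        card (sing_points (Ufam eps a)) = 3 \<and>
        (\<forall>p \<in> sing_points (Ufam eps a). ordinary_double_point (Ufam eps a) p))
   \<and> (\<exists>k :: complex. k \<noteq> 0 \<and>
        (let s = (\<lambda>a :: complex^3. a$1 + eps * a$2 + eps^2 * a$3);
             g = (\<lambda>a :: complex^3. (\<chi> i :: 4. if i = 1 then - (k^3 * (s a)^3)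
                                              else if i = 4 then - 3 * k * s a else 0))
         in holo_map_on g UNIV \<and> g 0 = 0 \<and> g ` UNIV = curveC \<and>
            (\<exists>N \<Phi> u. open N \<and> (0, 0) \<in> N \<and>
               holo2_map_on \<Phi> N \<and> holo2_fun_on u N \<and> (\<forall>z\<in>N. u z \<noteq> 0) \<and>
               \<Phi> (0, 0) = 0 \<and> local_biholo (\<lambda>p. \<Phi> (0, p)) 0 \<and>
               (\<forall>(a, p) \<in> N. Ufam eps a p = u (a, p) * Xfam (g a) (\<Phi> (a, p))))))"
proof -
  have "base_map eps (1/3) 0 = 0" by (simp add: base_map_def vec_eq_iff)
  then have part3: "holo_map_on (base_map eps (1/3)) UNIV \<and> base_map eps (1/3) 0 = 0 \<and>
      base_map eps (1/3) ` UNIV = curveC \<and>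
      (\<exists>N \<Phi> u. open N \<and> (0, 0) \<in> N \<and>
         holo2_map_on \<Phi> N \<and> holo2_fun_on u N \<and> (\<forall>z\<in>N. u z \<noteq> 0) \<and>
         \<Phi> (0, 0) = 0 \<and> local_biholo (\<lambda>p. \<Phi> (0, p)) 0 \<and>
         (\<forall>(a, p) \<in> N. Ufam eps a p = u (a, p) * Xfam (base_map eps (1/3) a) (\<Phi> (a, p))))"
    using base_map_holomorphic base_map_image miniversal_pullback[OF assms] by blast
  show ?thesis
    using cusp_case[OF assms] three_singular_points[OF assms] ordinary_double_points[OF assms]
      part3[unfolded base_map_def]
    by (intro conjI allI impI exI[of _ "1/3"]) (auto simp: Let_def)
qed

end
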